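(* In the setting described in the context, for every $x\in X$ it holds that $|\pi^{-1}(\{\pi(x)\})|\leq m^{2^r}$.
   Context: Let $r\geq 2$, $G=\mathbb Z^r$ with standard basis $e_1,\dots,e_r$. For each $j$, let $(p_j^i)_{i\in\mathbb N}$ be a strictly increasing sequence of positive integers with $p_j^i\mid p_j^{i+1}$ and $p_j^i>2i+1$, and let $\Gamma_i=\langle p_j^ie_j:1\leq j\leq r\rangle$, assumed to satisfy $[\Gamma_i:\Gamma_{i+1}]>1/(1-2^{-(1/2)^{i+1}})$. Let $(D_i)_{i\in\mathbb N}$ be finite subsets of $\mathbb Z^r$ such that: each $D_i$ is a fundamental domain of $\mathbb Z^r/\Gamma_i$ of the form $\{(x_1,\dots,x_r): -q^i_{1,j}\leq x_j<q^i_{2,j},\ 1\le j\le r\}$ with integers $q^i_{1,j},q^i_{2,j}>i$, $q^i_{1,j}+q^i_{2,j}=p^i_j$; $0\in D_i\subseteq D_{i+1}$; $\bigcup_iD_i=\mathbb Z^r$; and $D_i=\bigcup_{\gamma\in D_i\cap\Gamma_{i-1}}(\gamma+D_{i-1})$ for $i\geq2$. Let $m\geq 2$, $\Sigma=\{1,\dots,m\}$, and $\alpha_i\in\Sigma$ the element with $\alpha_i\equiv i\pmod m$. Define $\eta\in\Sigma^{\mathbb Z^r}$: $J(0)=\{0\}$ and $\eta(\gamma)=\alpha_1$ for $\gamma\in\Gamma_1$; for $k\geq1$, $J(k)=D_k\setminus\bigcup_{i=0}^{k-1}(J(i)+\Gamma_{i+1})$ and $\eta(\gamma+h)=\alpha_{k+1}$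 for $h\in J(k)$, $\gamma\in\Gamma_{k+1}$. With the shift $\sigma^g(x)(h)=x(h-g)$, let $X$ be the closure of the $\sigma$-orbit of $\eta$. For $y\in\Sigma^{\mathbb Z^r}$, a subgroup $\Gamma$ and $\alpha\in\Sigma$, let $\mathrm{Per}(y,\Gamma,\alpha)=\{g: y(g-\gamma)=\alpha\ \forall\gamma\in\Gamma\}$, and $C_i=\{y\in X:\mathrm{Per}(y,\Gamma_i,\alpha)=\mathrm{Per}(\eta,\Gamma_i,\alpha)\ \forall\alpha\in\Sigma\}$. The odometer is $\overleftarrow{G}=\{(t_i+\Gamma_i)_i\in\prod_i\mathbb Z^r/\Gamma_i: t_{i+1}+\Gamma_i=t_i+\Gamma_i\}$, and $\pi:X\to\overleftarrow G$ is the factor map (onto the maximal equicontinuous factor) given by $\pi(x)=(t_i+\Gamma_i)_i$ where $\sigma^{t_i}x\in C_i$ for each $i$. *)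

theory Defs
  imports "HOL-Analysis.Analysis"
begin

text \<open>The group G = Z^r is modelled as int^'n with CARD('n) = r.
  Configurations in Sigma^G are functions int^'n => int (product topology from
  HOL-Analysis Function_Topology; int carries the discrete topology).
  Sequences indexed by N = {1,2,...} are modelled as functions on nat, where only
  indices >= 1 are used/constrained.\<close>

definition setplus :: "('a::plus) set \<Rightarrow> 'a set \<Rightarrow> 'a set" where
  "setplus A B = {a + b | a b. a \<in> A \<and> b \<in> B}"

definition Gam :: "('n::finite \<Rightarrow> nat \<Rightarrow> int) \<Rightarrow> nat \<Rightarrow> (int^'n) set" where
  "Gam p i = {g. \<forall>j. p j i dvd g $ j}"

definition subgroup_index :: "(int^'n) set \<Rightarrow> (int^'n) set \<Rightarrow> nat" where
  "subgroup_index H K = card ((\<lambda>g. setplus {g} K) ` H)"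

definition alpha :: "nat \<Rightarrow> nat \<Rightarrow> int" where
  "alpha m i = (int i - 1) mod int m + 1"

text \<open>JU p D k = union over i<k of (J(i) + Gamma_(i+1)); J is defined from it.\<close>
primrec JU :: "('n::finite \<Rightarrow> nat \<Rightarrow> int) \<Rightarrow> (nat \<Rightarrow> (int^'n) set) \<Rightarrow> nat \<Rightarrow> (int^'n) set" where
  "JU p D 0 = {}"
| "JU p D (Suc k) = JU p D k \<union>
     setplus (if k = 0 then {0} else D k - JU p D k) (Gam p (Suc k))"

definition J :: "('n::finite \<Rightarrow> nat \<Rightarrow> int) \<Rightarrow> (nat \<Rightarrow> (int^'n) set) \<Rightarrow> nat \<Rightarrow> (int^'n) set" where
  "J p D k = (if k = 0 then {0} else D k - JU p D k)"

text \<open>eta(gamma + h) = alpha_(k+1) for h in J(k), gamma in Gamma_(k+1).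
  (These sets are pairwise disjoint, so the least such k is the unique one.)\<close>
definition eta :: "('n::finite \<Rightarrow> nat \<Rightarrow> int) \<Rightarrow> (nat \<Rightarrow> (int^'n) set) \<Rightarrow> nat \<Rightarrow> (int^'n \<Rightarrow> int)" where
  "eta p D m = (\<lambda>g. alpha m (Suc (LEAST k. g \<in> setplus (J p D k) (Gam p (Suc k)))))"

definition shift :: "int^'n \<Rightarrow> (int^'n \<Rightarrow> int) \<Rightarrow> (int^'n \<Rightarrow> int)" where
  "shift g x = (\<lambda>h. x (h - g))"

definition Xs :: "('n::finite \<Rightarrow> nat \<Rightarrow> int) \<Rightarrow> (nat \<Rightarrow> (int^'n) set) \<Rightarrow> nat \<Rightarrow> (int^'n \<Rightarrow> int) set" where
  "Xs p D m = closure (range (\<lambda>g. shift g (eta p D m)))"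

definition Per :: "(int^'n \<Rightarrow> int) \<Rightarrow> (int^'n) set \<Rightarrow> int \<Rightarrow> (int^'n) set" where
  "Per y \<Gamma> a = {g. \<forall>\<gamma>\<in>\<Gamma>. y (g - \<gamma>) = a}"

definition Cs :: "('n::finite \<Rightarrow> nat \<Rightarrow> int) \<Rightarrow> (nat \<Rightarrow> (int^'n) set) \<Rightarrow> nat \<Rightarrow> nat \<Rightarrow> (int^'n \<Rightarrow> int) set" where
  "Cs p D m i = {y \<in> Xs p D m. \<forall>a \<in> {1..int m}.
      Per y (Gam p i) a = Per (eta p D m) (Gam p i) a}"

text \<open>pi x = (t_i + Gamma_i)_(i>=1) with shift t_i x in C_i; index 0 is a dummy.\<close>
definition piX :: "('n::finite \<Rightarrow> nat \<Rightarrow> int) \<Rightarrow> (nat \<Rightarrow> (int^'n) set) \<Rightarrow> nat \<Rightarrow> (int^'n \<Rightarrow> int) \<Rightarrow> nat \<Rightarrow> (int^'n) set" where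
  "piX p D m x = (\<lambda>i. if i = 0 then {} else
      setplus {SOME t. shift t x \<in> Cs p D m i} (Gam p i))"

end

theory Submission
  imports Defs
begin

(*
  Write U_N for the union of the first N layers J(i) + Gamma_(i+1). Then U_N is exactly the set of
  points where eta is Gamma_N-periodic, and the only translations preserving U_N are those in
  Gamma_N. Hence every y in the fiber of x, shifted by the phase t_N of x, agrees on each finite
  window with a Gamma_N-translate of eta. Two consequences: y coincides with x wherever x is
  periodic at some level, and y takes equal values at aperiodic points h, h' of x whenever
  h + t_N and h' + t_N lie in the same Gamma_N-translate of D_N, because eta cannot tell apart two
  points of one tile that both lie outside U_N. As D_N is a box with sides longer than N, any
  2^r + 1 points whose coordinates differ by less than N contain two from the same tile. So the
  aperiodic points of x split into at most 2^r classes on which every y in the fiber is constant,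
  and y is determined by its values on representatives, leaving at most m^(2^r) choices.
*)

lemma setplus_iff: "a \<in> setplus A B \<longleftrightarrow> (\<exists>x\<in>A. \<exists>y\<in>B. a = x + y)"
  by (auto simp: setplus_def)

lemma Gam_iff: "g \<in> Gam p i \<longleftrightarrow> (\<forall>j. p j i dvd g $ j)"
  by (simp add: Gam_def)

lemma zero_in_Gam [simp]: "0 \<in> Gam p i"
  by (simp add: Gam_def)

lemma add_in_Gam: "a \<in> Gam p i \<Longrightarrow> b \<in> Gam p i \<Longrightarrow> a + b \<in> Gam p i"
  by (simp add: Gam_def)

lemma uminus_in_Gam: "a \<in> Gam p i \<Longrightarrow> - a \<in> Gam p i"
  by (simp add: Gam_def)

lemma diff_in_Gam: "a \<in> Gam p i \<Longrightarrow> b \<in> Gam p i \<Longrightarrow> a - b \<in> Gam p i"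
  by (simp add: Gam_def dvd_diff)

lemma Per_iff: "g \<in> Per y G a \<longleftrightarrow> (\<forall>\<gamma>\<in>G. y (g - \<gamma>) = a)"
  by (simp add: Per_def)

lemma mem_Per_shift_iff: "g \<in> Per (shift t y) G a \<longleftrightarrow> g - t \<in> Per y G a"
  by (simp add: Per_iff shift_def algebra_simps)

lemma shift_shift: "shift c (shift g x) = shift (g + c) x"
  by (simp add: shift_def algebra_simps)

lemma continuous_on_shift: "continuous_on UNIV (shift c :: (int^'n \<Rightarrow> int) \<Rightarrow> _)"
  unfolding shift_def by (intro continuous_on_coordinatewise_then_product) simp

lemma alpha_in_range: "m \<ge> 1 \<Longrightarrow> alpha m i \<in> {1..int m}"
proof -
  assume "m \<ge> 1"
  then have "0 \<le> (int i - 1) mod int m" "(int i - 1) mod int m < int m"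
    by simp_all
  then show ?thesis
    by (simp add: alpha_def)
qed

lemma alpha_Suc_neq: "m \<ge> 2 \<Longrightarrow> alpha m (Suc i) \<noteq> alpha m (Suc (Suc i))"
proof
  assume m: "m \<ge> 2" and "alpha m (Suc i) = alpha m (Suc (Suc i))"
  then have "int i mod int m = (int i + 1) mod int m"
    by (simp add: alpha_def add.commute)
  then have "int m dvd (int i + 1) - int i"
    by (metis mod_eq_dvd_iff)
  then show False
    using m by simp
qed

lemma JU_Suc_J: "JU p D (Suc k) = JU p D k \<union> setplus (J p D k) (Gam p (Suc k))"
  by (simp add: J_def)

lemma JU_Suc: "k \<ge> 1 \<Longrightarrow> JU p D (Suc k) = JU p D k \<union> setplus (D k - JU p D k) (Gam p (Suc k))"
  by simp

declare JU.simps(2) [simp del]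

lemma mem_JU_Suc_iff:
  "g \<in> JU p D (Suc k) \<longleftrightarrow> (\<exists>i\<le>k. g \<in> setplus (J p D i) (Gam p (Suc i)))"
  by (induction k) (auto simp: JU_Suc_J le_Suc_eq)

lemma JU_mono: "k \<le> k' \<Longrightarrow> JU p D k \<subseteq> JU p D k'"
  by (induction k' rule: dec_induct) (auto simp: JU_Suc_J)

lemma Least_ex_le: "(LEAST k::nat. \<exists>i\<le>k. P i) = (LEAST k. P k)"
proof (cases "\<exists>k. P k")
  case True
  then obtain k where "P k" by blast
  show ?thesis
  proof (rule Least_equality)
    show "\<exists>i\<le>(LEAST k. P k). P i"
      using LeastI[of P k, OF \<open>P k\<close>] by blast
  next
    fix n assume "\<exists>i\<le>n. P i"
    then show "(LEAST k. P k) \<le> n"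
      using Least_le[of P] order_trans by blast
  qed
qed simp

lemma eta_eq_alpha_Least_JU: "eta p D m g = alpha m (Suc (LEAST k. g \<in> JU p D (Suc k)))"
  by (simp only: eta_def mem_JU_Suc_iff Least_ex_le)

lemma eta_cong_JU: "(\<And>k. b \<in> JU p D k \<longleftrightarrow> b' \<in> JU p D k) \<Longrightarrow> eta p D m b = eta p D m b'"
  by (simp add: eta_eq_alpha_Least_JU)

lemma eta_in_range: "m \<ge> 1 \<Longrightarrow> eta p D m g \<in> {1..int m}"
  unfolding eta_def by (rule alpha_in_range)

definition separates :: "('a \<Rightarrow> 'b) set \<Rightarrow> 'a set \<Rightarrow> bool" where
  "separates Y S \<longleftrightarrow> (\<forall>a\<in>S. \<forall>b\<in>S. a \<noteq> b \<longrightarrow> (\<exists>y\<in>Y. y a \<noteq> y b))"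

lemma finite_card_le_power_if_separated_sets_bounded:
  fixes Y :: "('a \<Rightarrow> 'b) set"
  assumes range: "\<And>y a. y \<in> Y \<Longrightarrow> y a \<in> A" and "finite A"
    and agree: "\<And>y y' a. y \<in> Y \<Longrightarrow> y' \<in> Y \<Longrightarrow> a \<notin> H \<Longrightarrow> y a = y' a"
    and bounded: "\<And>S. S \<subseteq> H \<Longrightarrow> finite S \<Longrightarrow> separates Y S \<Longrightarrow> card S \<le> K"
  shows "finite Y \<and> card Y \<le> card A ^ K"
proof -
  define Q where "Q S \<longleftrightarrow> S \<subseteq> H \<and> finite S \<and> separates Y S" for S
  have "\<forall>S. Q S \<longrightarrow> card S < K + 1"
    using bounded by (auto simp: Q_def less_Suc_eq_le)
  then obtain S0 where S0: "Q S0" and S0_max: "\<And>S. Q S \<Longrightarrow> card S \<le> card S0"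
    using Lattices_Big.ex_has_greatest_nat[of Q "{}" card "K + 1"]
    by (auto simp: Q_def separates_def)
  have S0_covers: "\<exists>s\<in>S0. \<forall>y\<in>Y. y h = y s" if "h \<in> H" for h
  proof (rule ccontr)
    assume not_covered: "\<not> (\<exists>s\<in>S0. \<forall>y\<in>Y. y h = y s)"
    then have "Q (insert h S0)"
      using S0 that unfolding Q_def separates_def by (metis insert_iff insert_subset finite_insert)
    then have "card (insert h S0) \<le> card S0" by (rule S0_max)
    moreover have "h \<notin> S0" using not_covered by blast
    ultimately show False using S0 by (simp add: Q_def)
  qed
  have inj: "inj_on (\<lambda>y. restrict y S0) Y"
  proof (rule inj_onI, rule ext)
    fix y y' h assume y: "y \<in> Y" "y' \<in> Y" and eq: "restrict y S0 = restrict y' S0"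
    show "y h = y' h"
    proof (cases "h \<in> H")
      case True
      then obtain s where "s \<in> S0" "\<forall>y\<in>Y. y h = y s" using S0_covers by blast
      then show ?thesis using y fun_cong[OF eq, of s] by (metis restrict_apply')
    qed (use agree y in blast)
  qed
  have image: "(\<lambda>y. restrict y S0) ` Y \<subseteq> PiE S0 (\<lambda>_. A)"
    using range by auto
  have finite_Pi: "finite (PiE S0 (\<lambda>_. A))"
    using S0 \<open>finite A\<close> by (auto simp: Q_def intro: finite_PiE)
  have "card Y = card ((\<lambda>y. restrict y S0) ` Y)"
    using card_image[OF inj] by simp
  also have "\<dots> \<le> card A ^ card S0"
    using card_mono[OF finite_Pi image] S0 by (simp add: Q_def card_PiE)
  also have "\<dots> \<le> card A ^ K" if "Y \<noteq> {}"
  proof -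
    have "A \<noteq> {}" using that range by blast
    then show ?thesis
      using S0 bounded \<open>finite A\<close> by (intro power_increasing) (auto simp: Q_def card_gt_0_iff Suc_le_eq)
  qed
  finally show ?thesis
    using finite_imageD[OF finite_subset[OF image finite_Pi] inj] by (cases "Y = {}") auto
qed

lemma div_takes_two_values:
  fixes f :: "'a \<Rightarrow> int"
  assumes "finite S" "P > 0" and close: "\<And>a b. a \<in> S \<Longrightarrow> b \<in> S \<Longrightarrow> f a < f b + P"
  shows "\<exists>M. \<forall>a\<in>S. f a div P \<in> {M, M + 1}"
proof -
  define M where "M = Min ((\<lambda>a. f a div P) ` S)"
  have "f a div P \<in> {M, M + 1}" if "a \<in> S" for a
  proof -
    have "M \<in> (\<lambda>a. f a div P) ` S"
      unfolding M_def using assms(1) that by (intro Min_in) auto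
    then obtain b where "b \<in> S" "f b div P = M"
      by force
    have "f a div P \<le> (f b + P) div P"
      using close[OF that \<open>b \<in> S\<close>] by (intro zdiv_mono1) (use assms(2) in auto)
    moreover have "M \<le> f a div P"
      unfolding M_def using assms(1) that by simp
    ultimately show ?thesis
      using \<open>f b div P = M\<close> assms(2) by auto
  qed
  then show ?thesis
    by blast
qed

locale toeplitz =
  fixes p :: "'n::finite \<Rightarrow> nat \<Rightarrow> int" and D :: "nat \<Rightarrow> (int^'n) set" and m :: nat
  assumes p_prop: "\<forall>j i. i \<ge> 1 \<longrightarrow> 0 < p j i \<and> p j i < p j (Suc i) \<and> p j i dvd p j (Suc i)
                   \<and> p j i > 2 * int i + 1"
    and D_box: "\<forall>i\<ge>1. \<exists>q1 q2 :: 'n \<Rightarrow> int. (\<forall>j. q1 j > int i \<and> q2 j > int i \<and> q1 j + q2 j = p j i)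
                   \<and> D i = {v. \<forall>j. - q1 j \<le> v $ j \<and> v $ j < q2 j}"
    and D_fund: "\<forall>i\<ge>1. \<forall>g. \<exists>!d. d \<in> D i \<and> g - d \<in> Gam p i"
    and D_mono: "\<forall>i\<ge>1. 0 \<in> D i \<and> D i \<subseteq> D (Suc i)"
    and D_union: "(\<Union>i\<in>{1..}. D i) = UNIV"
    and D_rec: "\<forall>i\<ge>2. D i = (\<Union>\<gamma>\<in>D i \<inter> Gam p (i - 1). (\<lambda>d. \<gamma> + d) ` D (i - 1))"
    and m2: "m \<ge> 2"
begin

abbreviation \<Gamma> where "\<Gamma> \<equiv> Gam p"
abbreviation U where "U \<equiv> JU p D"
abbreviation \<eta> where "\<eta> \<equiv> eta p D m"

lemma Gam_Suc_subset: "i \<ge> 1 \<Longrightarrow> \<Gamma> (Suc i) \<subseteq> \<Gamma> i"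
  using p_prop by (auto simp: Gam_def intro: dvd_trans)

lemma Gam_antimono:
  assumes "1 \<le> N" "N \<le> K"
  shows "\<Gamma> K \<subseteq> \<Gamma> N"
  using assms(2)
proof (induction K rule: dec_induct)
  case (step k)
  then show ?case
    using Gam_Suc_subset[of k] assms(1) by simp
qed simp

lemma ex_D_representative: "i \<ge> 1 \<Longrightarrow> \<exists>d\<in>D i. g - d \<in> \<Gamma> i"
  using D_fund by blast

lemma D_representative_unique:
  assumes "i \<ge> 1" "d \<in> D i" "d' \<in> D i" "d - d' \<in> \<Gamma> i"
  shows "d = d'"
proof -
  have "\<exists>!e. e \<in> D i \<and> d - e \<in> \<Gamma> i"
    using D_fund assms(1) by blast
  then show ?thesis
    using assms by force
qed

lemma finite_D: "i \<ge> 1 \<Longrightarrow> finite (D i)"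
proof -
  assume "i \<ge> 1"
  then obtain q1 q2 :: "'n \<Rightarrow> int" where Di: "D i = {v. \<forall>j. - q1 j \<le> v $ j \<and> v $ j < q2 j}"
    using D_box by blast
  have "vec_nth ` D i \<subseteq> PiE UNIV (\<lambda>j. {- q1 j..<q2 j})"
    by (auto simp: Di PiE_def extensional_def)
  then have "finite (vec_nth ` D i)"
    by (rule finite_subset) (intro finite_PiE; simp)
  moreover have "inj_on vec_nth (D i)"
    by (simp add: inj_on_def vec_eq_iff)
  ultimately show ?thesis
    using finite_imageD by blast
qed

lemma D_Suc_eq: "N \<ge> 1 \<Longrightarrow> D (Suc N) = (\<Union>\<gamma>\<in>D (Suc N) \<inter> \<Gamma> N. (\<lambda>d. \<gamma> + d) ` D N)"
  using D_rec by (metis Suc_1 Suc_le_mono diff_Suc_1)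

lemma JU_1: "U 1 = \<Gamma> 1"
  by (auto simp: JU_Suc_J J_def setplus_iff)

lemma JU_add_Gam: "k \<ge> 1 \<Longrightarrow> \<gamma> \<in> \<Gamma> k \<Longrightarrow> g \<in> U k \<Longrightarrow> g + \<gamma> \<in> U k"
proof (induction k arbitrary: g \<gamma> rule: dec_induct)
  case base
  then show ?case by (metis JU_1 One_nat_def add_in_Gam)
next
  case (step k)
  show ?case
  proof (cases "g \<in> U k")
    case True
    then show ?thesis
      using step Gam_Suc_subset[of k] by (auto simp: JU_Suc)
  next
    case False
    then obtain d \<delta> where "d \<in> D k - U k" "\<delta> \<in> \<Gamma> (Suc k)" "g = d + \<delta>"
      using step.prems by (auto simp: JU_Suc[OF step.hyps(1)] setplus_iff)
    then have "g + \<gamma> \<in> setplus (D k - U k) (\<Gamma> (Suc k))"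
      using step.prems(1) unfolding setplus_iff by (metis add.assoc add_in_Gam)
    then show ?thesis
      by (simp add: JU_Suc[OF step.hyps(1)])
  qed
qed

lemma JU_add_Gam_iff: "1 \<le> k \<Longrightarrow> k \<le> K \<Longrightarrow> \<gamma> \<in> \<Gamma> K \<Longrightarrow> g + \<gamma> \<in> U k \<longleftrightarrow> g \<in> U k"
  using JU_add_Gam[of k \<gamma> g] JU_add_Gam[of k "- \<gamma>" "g + \<gamma>"] Gam_antimono[of k K]
  by (auto intro: uminus_in_Gam)

lemma D_subset_JU_Suc: "k \<ge> 1 \<Longrightarrow> D k \<subseteq> U (Suc k)"
  by (auto simp: JU_Suc setplus_iff) (metis DiffI add.right_neutral zero_in_Gam)

lemma eta_eq_alpha_if_not_JU:
  assumes "K \<ge> 1" "e \<in> D K" "e \<notin> U K"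
  shows "\<eta> e = alpha m (Suc K)"
proof -
  have "(LEAST k. e \<in> U (Suc k)) = K"
  proof (rule Least_equality)
    show "e \<in> U (Suc K)"
      using D_subset_JU_Suc assms by blast
    show "K \<le> k" if "e \<in> U (Suc k)" for k
      using JU_mono[of "Suc k" K p D] that assms(3) by (metis not_less_eq_eq subsetD)
  qed
  then show ?thesis
    by (simp add: eta_eq_alpha_Least_JU)
qed

lemma eta_add_Gam: "N \<ge> 1 \<Longrightarrow> g \<in> U N \<Longrightarrow> \<gamma> \<in> \<Gamma> N \<Longrightarrow> \<eta> (g + \<gamma>) = \<eta> g"
proof (rule eta_cong_JU)
  fix k assume N: "N \<ge> 1" and g: "g \<in> U N" and \<gamma>: "\<gamma> \<in> \<Gamma> N"
  show "g + \<gamma> \<in> U k \<longleftrightarrow> g \<in> U k"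
  proof (cases "k \<le> N")
    case True
    then show ?thesis
      using JU_add_Gam_iff[of k N \<gamma> g] \<gamma> by (cases "k = 0") auto
  next
    case False
    then show ?thesis
      using JU_mono[of N k] JU_add_Gam[OF N \<gamma> g] g by auto
  qed
qed

lemma eta_eventually_periodic: "N \<ge> 1 \<Longrightarrow> \<exists>K\<ge>N. \<forall>\<gamma>\<in>\<Gamma> K. \<eta> (b + \<gamma>) = \<eta> b"
proof -
  assume N: "N \<ge> 1"
  obtain i where "i \<ge> 1" "b \<in> D i"
    using D_union by auto
  then have "b \<in> U (max (Suc i) N)"
    using D_subset_JU_Suc[of i] JU_mono[of "Suc i" "max (Suc i) N" p D] by auto
  then show ?thesis
    using eta_add_Gam[of "max (Suc i) N" b] N by (intro exI[of _ "max (Suc i) N"]) auto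
qed

definition same_tile :: "nat \<Rightarrow> int^'n \<Rightarrow> int^'n \<Rightarrow> bool" where
  "same_tile N a b \<longleftrightarrow> (\<exists>\<gamma>\<in>\<Gamma> N. a - \<gamma> \<in> D N \<and> b - \<gamma> \<in> D N)"

lemma same_tile_sym: "same_tile N a b \<Longrightarrow> same_tile N b a"
  by (auto simp: same_tile_def)

lemma same_tile_add_Gam: "\<delta> \<in> \<Gamma> N \<Longrightarrow> same_tile N a b \<Longrightarrow> same_tile N (a + \<delta>) (b + \<delta>)"
  unfolding same_tile_def
  by (metis add_in_Gam add_diff_cancel_right)

lemma D_mem_if_same_tile:
  assumes N: "1 \<le> N" and "N \<le> k"
  shows "same_tile N a b \<Longrightarrow> a \<in> D k \<Longrightarrow> b \<in> D k"
  using assms(2)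
proof (induction k arbitrary: a b rule: dec_induct)
  case base
  then obtain \<gamma> where "\<gamma> \<in> \<Gamma> N" "a - \<gamma> \<in> D N" "b - \<gamma> \<in> D N"
    by (auto simp: same_tile_def)
  then have "a = a - \<gamma>"
    using D_representative_unique[OF N base.prems(2)] by simp
  then show ?case
    using \<open>b - \<gamma> \<in> D N\<close> by simp
next
  case (step k)
  then have k: "k \<ge> 1" using N by simp
  from step.prems(2) obtain \<gamma> d where \<gamma>: "\<gamma> \<in> D (Suc k)" "\<gamma> \<in> \<Gamma> k" and "d \<in> D k" "a = \<gamma> + d"
    using D_Suc_eq[OF k] by blast
  have "- \<gamma> \<in> \<Gamma> N"
    using \<gamma>(2) Gam_antimono[OF N step.hyps(1)] by (blast intro: uminus_in_Gam)
  then have "same_tile N d (b - \<gamma>)"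
    using same_tile_add_Gam[OF _ step.prems(1)] \<open>a = \<gamma> + d\<close> by fastforce
  then have "b - \<gamma> \<in> D k"
    using step.IH \<open>d \<in> D k\<close> by blast
  then have "\<gamma> + (b - \<gamma>) \<in> D (Suc k)"
    using D_Suc_eq[OF k] \<gamma> by blast
  then show ?case by simp
qed

lemma JU_mem_if_same_tile:
  assumes N: "1 \<le> N"
  shows "same_tile N a b \<Longrightarrow> a \<notin> U N \<Longrightarrow> b \<notin> U N \<Longrightarrow> a \<in> U k \<Longrightarrow> b \<in> U k"
proof (induction k arbitrary: a b)
  case 0
  then show ?case by simp
next
  case (Suc k)
  show ?case
  proof (cases "Suc k \<le> N \<or> a \<in> U k")
    case True
    then show ?thesis
      using Suc.IH[OF Suc.prems(1-3)] Suc.prems(2,4) JU_mono[of "Suc k" N p D]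
        JU_mono[of k "Suc k" p D] by auto
  next
    case False
    then have "N \<le> k" and k: "k \<ge> 1" and "a \<notin> U k"
      using N by auto
    with Suc.prems(4) obtain d \<gamma> where d: "d \<in> D k" "d \<notin> U k" "\<gamma> \<in> \<Gamma> (Suc k)" "a = d + \<gamma>"
      by (auto simp: JU_Suc setplus_iff)
    have \<gamma>: "- \<gamma> \<in> \<Gamma> N"
      using d(3) Gam_antimono[OF N, of "Suc k"] \<open>N \<le> k\<close> by (auto intro: uminus_in_Gam)
    have tile: "same_tile N (b - \<gamma>) d"
      using same_tile_add_Gam[OF \<gamma> Suc.prems(1)] d(4) by (simp add: same_tile_sym)
    have "d \<notin> U N" "b - \<gamma> \<notin> U N"
      using JU_add_Gam_iff[OF N order_refl \<gamma>, of a] JU_add_Gam_iff[OF N order_refl \<gamma>, of b]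
        Suc.prems(2,3) d(4) by simp_all
    then have "b - \<gamma> \<notin> U k"
      using Suc.IH[OF tile] d(2) by blast
    moreover have "b - \<gamma> \<in> D k"
      using D_mem_if_same_tile[OF N \<open>N \<le> k\<close> same_tile_sym[OF tile] d(1)] .
    ultimately have "b \<in> setplus (D k - U k) (\<Gamma> (Suc k))"
      using d(3) unfolding setplus_iff by (metis Diff_iff diff_add_cancel)
    then show ?thesis
      by (simp add: JU_Suc[OF k])
  qed
qed

lemma eta_eq_if_same_tile:
  assumes "1 \<le> N" "same_tile N a b" "a \<notin> U N" "b \<notin> U N"
  shows "\<eta> a = \<eta> b"
  using JU_mem_if_same_tile[OF assms(1)] same_tile_sym assms(2-) by (blast intro: eta_cong_JU)

lemma ex_Gam_D_Suc_not_Gam_Suc: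
  assumes N: "N \<ge> 1"
  shows "\<exists>\<gamma>. \<gamma> \<in> \<Gamma> N \<and> \<gamma> \<in> D (Suc N) \<and> \<gamma> \<notin> \<Gamma> (Suc N)"
proof -
  fix j0 :: 'n
  define v :: "int^'n" where "v = (\<chi> j. if j = j0 then p j0 N else 0)"
  have v: "v \<in> \<Gamma> N"
    by (simp add: v_def Gam_iff)
  obtain \<gamma> where \<gamma>: "\<gamma> \<in> D (Suc N)" "v - \<gamma> \<in> \<Gamma> (Suc N)"
    using ex_D_representative[of "Suc N" v] by auto
  have "v - \<gamma> \<in> \<Gamma> N"
    using \<gamma>(2) Gam_Suc_subset[OF N] by blast
  then have "\<gamma> \<in> \<Gamma> N"
    using diff_in_Gam[OF v \<open>v - \<gamma> \<in> \<Gamma> N\<close>] by simp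
  moreover have "\<gamma> \<notin> \<Gamma> (Suc N)"
  proof
    assume "\<gamma> \<in> \<Gamma> (Suc N)"
    then have "v - \<gamma> + \<gamma> \<in> \<Gamma> (Suc N)"
      using add_in_Gam[OF \<gamma>(2)] by blast
    then have "p j0 (Suc N) dvd v $ j0"
      by (simp add: Gam_iff)
    then have "p j0 (Suc N) dvd p j0 N"
      by (simp add: v_def)
    moreover have "0 < p j0 N" "p j0 N < p j0 (Suc N)"
      using p_prop N by auto
    ultimately show False
      using zdvd_imp_le by fastforce
  qed
  ultimately show ?thesis
    using \<gamma>(1) by blast
qed

lemma not_JU_translates_into_D:
  assumes N: "N \<ge> 1" and g: "g \<notin> U N"
  shows "\<exists>\<gamma>\<in>\<Gamma> N. g + \<gamma> \<in> D N - U N" and "\<exists>\<gamma>\<in>\<Gamma> N. g + \<gamma> \<in> D (Suc N) - U (Suc N)"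
proof -
  obtain d where d: "d \<in> D N" "g - d \<in> \<Gamma> N"
    using ex_D_representative[OF N] by blast
  have d_minus_g: "d - g \<in> \<Gamma> N"
    using uminus_in_Gam[OF d(2)] by simp
  have "d \<notin> U N"
    using JU_add_Gam_iff[OF N order_refl d_minus_g, of g] g by simp
  then show "\<exists>\<gamma>\<in>\<Gamma> N. g + \<gamma> \<in> D N - U N"
    using d(1) d_minus_g by (intro bexI[of _ "d - g"]) auto
  obtain \<gamma> where \<gamma>: "\<gamma> \<in> \<Gamma> N" "\<gamma> \<in> D (Suc N)" "\<gamma> \<notin> \<Gamma> (Suc N)"
    using ex_Gam_D_Suc_not_Gam_Suc[OF N] by blast
  define e where "e = \<gamma> + d"
  have e_D: "e \<in> D (Suc N)"
    using D_Suc_eq[OF N] \<gamma> d(1) by (auto simp: e_def)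
  have e_not_U: "e \<notin> U N"
    using JU_add_Gam_iff[OF N order_refl \<gamma>(1), of d] \<open>d \<notin> U N\<close> by (simp add: e_def add.commute)
  \<comment> \<open>\<open>e\<close> is its own representative in \<open>D (Suc N) \<supseteq> D N\<close>, but \<open>e \<notin> D N\<close> since \<open>\<gamma> \<noteq> 0\<close>.\<close>
  have "e \<notin> setplus (D N - U N) (\<Gamma> (Suc N))"
  proof
    assume "e \<in> setplus (D N - U N) (\<Gamma> (Suc N))"
    then obtain d' \<delta> where d': "d' \<in> D N" "\<delta> \<in> \<Gamma> (Suc N)" "e = d' + \<delta>"
      by (auto simp: setplus_iff)
    have "e = d'"
      using D_representative_unique[of "Suc N" e d'] e_D d' D_mono N by auto
    then have "d' - d = \<gamma>"
      by (metis e_def add_diff_cancel_right')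
    then have "e = d"
      using D_representative_unique[OF N d'(1) d(1)] \<gamma>(1) \<open>e = d'\<close> by simp
    then show False
      using \<gamma>(3) by (simp add: e_def)
  qed
  then have "e \<notin> U (Suc N)"
    using e_not_U by (simp add: JU_Suc[OF N])
  moreover have "g + (d - g + \<gamma>) = e" "d - g + \<gamma> \<in> \<Gamma> N"
    using add_in_Gam[OF d_minus_g \<gamma>(1)] by (simp_all add: e_def)
  ultimately show "\<exists>\<gamma>\<in>\<Gamma> N. g + \<gamma> \<in> D (Suc N) - U (Suc N)"
    using e_D by (intro bexI[of _ "d - g + \<gamma>"]) auto
qed

lemma not_JU_imp_not_Per:
  assumes N: "N \<ge> 1" and g: "g \<notin> U N"
  shows "g \<notin> Per \<eta> (\<Gamma> N) \<alpha>"
proof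
  assume Per: "g \<in> Per \<eta> (\<Gamma> N) \<alpha>"
  obtain \<gamma>1 \<gamma>2 where \<gamma>: "\<gamma>1 \<in> \<Gamma> N" "g + \<gamma>1 \<in> D N - U N" "\<gamma>2 \<in> \<Gamma> N" "g + \<gamma>2 \<in> D (Suc N) - U (Suc N)"
    using not_JU_translates_into_D[OF N g] by blast
  have "\<eta> (g + \<gamma>1) = alpha m (Suc N)" "\<eta> (g + \<gamma>2) = alpha m (Suc (Suc N))"
    using eta_eq_alpha_if_not_JU[OF N] eta_eq_alpha_if_not_JU[of "Suc N"] \<gamma> by auto
  moreover have "\<eta> (g + \<gamma>1) = \<alpha>" "\<eta> (g + \<gamma>2) = \<alpha>"
    using Per uminus_in_Gam[OF \<gamma>(1)] uminus_in_Gam[OF \<gamma>(3)] unfolding Per_iff by force+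
  ultimately show False
    using alpha_Suc_neq[OF m2, of N] by simp
qed

lemma JU_iff_Per: "N \<ge> 1 \<Longrightarrow> g \<in> U N \<longleftrightarrow> (\<exists>\<alpha>\<in>{1..int m}. g \<in> Per \<eta> (\<Gamma> N) \<alpha>)"
proof
  assume N: "N \<ge> 1" and g: "g \<in> U N"
  have "g \<in> Per \<eta> (\<Gamma> N) (\<eta> g)"
    using eta_add_Gam[OF N g uminus_in_Gam] by (simp add: Per_iff)
  moreover have "\<eta> g \<in> {1..int m}"
    using eta_in_range[of m p D g] m2 by simp
  ultimately show "\<exists>\<alpha>\<in>{1..int m}. g \<in> Per \<eta> (\<Gamma> N) \<alpha>"
    by blast
qed (use not_JU_imp_not_Per in blast)

lemma JU_iff_translates_JU_Suc:
  assumes N: "N \<ge> 1"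
  shows "g \<in> U N \<longleftrightarrow> (\<forall>\<gamma>\<in>\<Gamma> N. g + \<gamma> \<in> U (Suc N))"
proof
  show "\<forall>\<gamma>\<in>\<Gamma> N. g + \<gamma> \<in> U (Suc N)" if "g \<in> U N"
    using JU_add_Gam[OF N _ that] JU_mono[of N "Suc N" p D] by auto
  show "g \<in> U N" if "\<forall>\<gamma>\<in>\<Gamma> N. g + \<gamma> \<in> U (Suc N)"
    using not_JU_translates_into_D(2)[OF N, of g] that by auto
qed

lemma ex_not_JU: "N \<ge> 1 \<Longrightarrow> \<exists>g. g \<notin> U N"
proof (induction N rule: dec_induct)
  case base
  fix j0 :: 'n
  have "p j0 1 > 1"
    using p_prop[rule_format, of 1 j0] by simp
  then have "\<not> p j0 1 dvd 1"
    using zdvd_imp_le by fastforce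
  then have "(\<chi> j. 1) \<notin> \<Gamma> 1"
    by (auto simp: Gam_iff)
  then show ?case
    using JU_1 by (intro exI[of _ "\<chi> j. 1"]) (simp add: One_nat_def)
next
  case (step N)
  then show ?case
    using not_JU_translates_into_D(2) by blast
qed

lemma Gam_if_JU_translation_invariant:
  "N \<ge> 1 \<Longrightarrow> (\<And>g. g + v \<in> U N \<longleftrightarrow> g \<in> U N) \<Longrightarrow> v \<in> \<Gamma> N"
proof (induction N rule: dec_induct)
  case base
  then show ?case
    using base.prems[of 0] JU_1 by (simp add: One_nat_def)
next
  case (step N)
  have N: "N \<ge> 1" using step.hyps by simp
  have "g + v \<in> U N \<longleftrightarrow> g \<in> U N" for g
  proof -
    have "g + \<gamma> + v \<in> U (Suc N) \<longleftrightarrow> g + \<gamma> \<in> U (Suc N)" for \<gamma>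
      using step.prems[of "g + \<gamma>"] .
    then show ?thesis
      unfolding JU_iff_translates_JU_Suc[OF N] by (simp add: algebra_simps)
  qed
  then have v: "v \<in> \<Gamma> N"
    by (rule step.IH)
  \<comment> \<open>A point of \<open>D N - U N\<close> enters \<open>U (Suc N)\<close> only through its own \<open>\<Gamma> (Suc N)\<close>-coset.\<close>
  obtain a \<gamma> where a: "\<gamma> \<in> \<Gamma> N" "a + \<gamma> \<in> D N - U N"
    using ex_not_JU[OF N] not_JU_translates_into_D(1)[OF N] by blast
  have "a + \<gamma> + v \<in> U (Suc N)"
    using step.prems D_subset_JU_Suc[OF N] a(2) by blast
  moreover have "a + \<gamma> + v \<notin> U N"
    using JU_add_Gam_iff[OF N order_refl v] a(2) by blast
  ultimately obtain d \<delta> where d: "d \<in> D N" "\<delta> \<in> \<Gamma> (Suc N)" "a + \<gamma> + v = d + \<delta>"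
    by (auto simp: JU_Suc[OF N] setplus_iff)
  have "(a + \<gamma>) - d = \<delta> - v"
    using d(3) by (simp add: algebra_simps)
  moreover have "\<delta> - v \<in> \<Gamma> N"
    using diff_in_Gam[OF _ v] d(2) Gam_Suc_subset[OF N] by blast
  ultimately have "a + \<gamma> = d"
    using D_representative_unique[OF N] a(2) d(1) by simp
  then show ?case
    using d(2,3) by simp
qed

abbreviation X where "X \<equiv> Xs p D m"

lemma X_agrees_with_shift_eta:
  assumes y: "y \<in> X" and F: "finite F"
  shows "\<exists>g. \<forall>w\<in>F. y w = shift g \<eta> w"
proof -
  define T where "T = (\<Inter>w\<in>F. (\<lambda>z::int^'n \<Rightarrow> int. z w) -` {y w})"
  have "open T"
    unfolding T_def
    by (intro open_INT F ballI open_vimage open_discrete continuous_on_product_coordinates)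
  moreover have "y \<in> T"
    by (simp add: T_def)
  ultimately have "T \<inter> range (\<lambda>g. shift g \<eta>) \<noteq> {}"
    using y open_Int_closure_eq_empty by (auto simp: Xs_def)
  then obtain g where "shift g \<eta> \<in> T"
    by blast
  then have "\<forall>w\<in>F. y w = shift g \<eta> w"
    by (auto simp: T_def)
  then show ?thesis ..
qed

lemma shift_in_X: "y \<in> X \<Longrightarrow> shift c y \<in> X"
proof -
  assume y: "y \<in> X"
  let ?S = "range (\<lambda>g. shift g \<eta>)"
  have "shift c ` ?S \<subseteq> ?S"
    by (auto simp: shift_shift)
  then have "shift c ` ?S \<subseteq> closure ?S"
    using closure_subset by blast
  then have "shift c ` closure ?S \<subseteq> closure ?S"
    by (intro image_closure_subset continuous_on_subset[OF continuous_on_shift]) auto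
  then show ?thesis
    using y by (auto simp: Xs_def)
qed

lemma X_in_range:
  assumes "y \<in> X"
  shows "y h \<in> {1..int m}"
proof -
  obtain g where "y h = \<eta> (h - g)"
    using X_agrees_with_shift_eta[OF assms, of "{h}"] by (auto simp: shift_def)
  then show ?thesis
    using eta_in_range[of m p D "h - g"] m2 by simp
qed

definition approx_Gam_shifts :: "nat \<Rightarrow> (int^'n \<Rightarrow> int) \<Rightarrow> bool" where
  "approx_Gam_shifts N z \<longleftrightarrow> (\<forall>F. finite F \<longrightarrow> (\<exists>\<gamma>\<in>\<Gamma> N. \<forall>w\<in>F. z w = shift \<gamma> \<eta> w))"

lemma ex_shift_approx_Gam_shifts:
  assumes y: "y \<in> X" and N: "N \<ge> 1"
  shows "\<exists>c. approx_Gam_shifts N (shift c y)"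
proof (rule ccontr)
  assume "\<nexists>c. approx_Gam_shifts N (shift c y)"
  then obtain W where W: "\<And>c. finite (W c)"
    "\<And>c \<gamma>. \<gamma> \<in> \<Gamma> N \<Longrightarrow> \<exists>w\<in>W c. y (w - c) \<noteq> \<eta> (w - \<gamma>)"
    unfolding approx_Gam_shifts_def shift_def by metis
  define F where "F = (\<Union>c\<in>D N. (\<lambda>w. w - c) ` W c)"
  have "finite F"
    unfolding F_def using finite_D[OF N] W(1) by blast
  then obtain g where g: "\<forall>w\<in>F. y w = \<eta> (w - g)"
    using X_agrees_with_shift_eta[OF y] by (auto simp: shift_def)
  obtain c where c: "c \<in> D N" "- g - c \<in> \<Gamma> N"
    using ex_D_representative[OF N] by blast
  then have "c + g \<in> \<Gamma> N"
    using uminus_in_Gam by fastforce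
  then obtain w where "w \<in> W c" "y (w - c) \<noteq> \<eta> (w - (c + g))"
    using W(2) by blast
  moreover have "w - c \<in> F"
    using c(1) \<open>w \<in> W c\<close> by (auto simp: F_def)
  ultimately show False
    using g by (simp add: algebra_simps)
qed

lemma approx_Gam_shifts_shift:
  assumes "\<delta> \<in> \<Gamma> N" "approx_Gam_shifts N z"
  shows "approx_Gam_shifts N (shift \<delta> z)"
  unfolding approx_Gam_shifts_def
proof (intro allI impI)
  fix F :: "(int^'n) set"
  assume "finite F"
  then obtain \<gamma> where "\<gamma> \<in> \<Gamma> N" "\<forall>w\<in>(\<lambda>w. w - \<delta>) ` F. z w = shift \<gamma> \<eta> w"
    using assms(2) unfolding approx_Gam_shifts_def by blast
  then show "\<exists>\<gamma>\<in>\<Gamma> N. \<forall>w\<in>F. shift \<delta> z w = shift \<gamma> \<eta> w"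
    using add_in_Gam[OF \<open>\<gamma> \<in> \<Gamma> N\<close> assms(1)] by (auto simp: shift_def algebra_simps)
qed

lemma Per_eq_Per_eta_if_approx_Gam_shifts:
  assumes N: "N \<ge> 1" and z: "approx_Gam_shifts N z"
  shows "Per z (\<Gamma> N) \<alpha> = Per \<eta> (\<Gamma> N) \<alpha>"
proof (intro set_eqI iffI)
  fix g assume Per: "g \<in> Per \<eta> (\<Gamma> N) \<alpha>"
  show "g \<in> Per z (\<Gamma> N) \<alpha>"
    unfolding Per_iff
  proof
    fix \<gamma> assume "\<gamma> \<in> \<Gamma> N"
    obtain \<gamma>' where "\<gamma>' \<in> \<Gamma> N" "z (g - \<gamma>) = \<eta> (g - (\<gamma> + \<gamma>'))"
      using z unfolding approx_Gam_shifts_def shift_def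
      by (metis (no_types, lifting) diff_diff_eq finite.emptyI finite_insert insertI1)
    then show "z (g - \<gamma>) = \<alpha>"
      using Per add_in_Gam[OF \<open>\<gamma> \<in> \<Gamma> N\<close>] by (simp add: Per_iff)
  qed
next
  fix g assume Per: "g \<in> Per z (\<Gamma> N) \<alpha>"
  show "g \<in> Per \<eta> (\<Gamma> N) \<alpha>"
  proof (rule ccontr)
    assume "g \<notin> Per \<eta> (\<Gamma> N) \<alpha>"
    then obtain \<gamma>0 where \<gamma>0: "\<gamma>0 \<in> \<Gamma> N" "\<eta> (g - \<gamma>0) \<noteq> \<alpha>"
      by (auto simp: Per_iff)
    \<comment> \<open>\<open>\<eta>\<close> is \<open>\<Gamma> K\<close>-periodic at \<open>g - \<gamma>0\<close>, and the window \<open>g - D K\<close> meets every \<open>\<Gamma> K\<close>-coset.\<close>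
    obtain K where K: "K \<ge> N" "\<forall>\<gamma>\<in>\<Gamma> K. \<eta> (g - \<gamma>0 + \<gamma>) = \<eta> (g - \<gamma>0)"
      using eta_eventually_periodic[OF N] by blast
    have K1: "K \<ge> 1" using K N by simp
    have "finite ((\<lambda>\<delta>. g - \<delta>) ` D K)"
      using finite_D[OF K1] by simp
    then obtain \<gamma> where \<gamma>: "\<gamma> \<in> \<Gamma> N" "\<forall>\<delta>\<in>D K. z (g - \<delta>) = \<eta> (g - \<delta> - \<gamma>)"
      using z unfolding approx_Gam_shifts_def shift_def by (metis (no_types, lifting) imageI)
    obtain \<delta> where \<delta>: "\<delta> \<in> D K" "(\<gamma>0 - \<gamma>) - \<delta> \<in> \<Gamma> K"
      using ex_D_representative[OF K1] by blast
    have "(\<gamma>0 - \<gamma>) - ((\<gamma>0 - \<gamma>) - \<delta>) \<in> \<Gamma> N"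
      using diff_in_Gam[OF diff_in_Gam[OF \<gamma>0(1) \<gamma>(1)]] \<delta>(2) Gam_antimono[OF N K(1)] by blast
    then have "z (g - \<delta>) = \<alpha>"
      using Per by (simp add: Per_iff)
    moreover have "g - \<delta> - \<gamma> = g - \<gamma>0 + ((\<gamma>0 - \<gamma>) - \<delta>)"
      by (simp add: algebra_simps)
    ultimately show False
      using \<gamma>(2) \<delta> K(2) \<gamma>0(2) by metis
  qed
qed

lemma approx_Gam_shifts_in_Cs: "z \<in> X \<Longrightarrow> N \<ge> 1 \<Longrightarrow> approx_Gam_shifts N z \<Longrightarrow> z \<in> Cs p D m N"
  by (simp add: Cs_def Per_eq_Per_eta_if_approx_Gam_shifts)

lemma ex_shift_in_Cs: "y \<in> X \<Longrightarrow> N \<ge> 1 \<Longrightarrow> \<exists>t. shift t y \<in> Cs p D m N"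
  using ex_shift_approx_Gam_shifts approx_Gam_shifts_in_Cs shift_in_X by blast

lemma JU_iff_Per_Cs:
  "N \<ge> 1 \<Longrightarrow> z \<in> Cs p D m N \<Longrightarrow> g \<in> U N \<longleftrightarrow> (\<exists>\<alpha>\<in>{1..int m}. g \<in> Per z (\<Gamma> N) \<alpha>)"
  by (simp add: JU_iff_Per Cs_def)

lemma Cs_shift_diff_in_Gam:
  assumes N: "N \<ge> 1" and "shift c y \<in> Cs p D m N" "shift t y \<in> Cs p D m N"
  shows "t - c \<in> \<Gamma> N"
proof (rule Gam_if_JU_translation_invariant[OF N])
  fix g
  have "g + (t - c) \<in> U N \<longleftrightarrow> (\<exists>\<alpha>\<in>{1..int m}. g - c \<in> Per y (\<Gamma> N) \<alpha>)"
    using JU_iff_Per_Cs[OF N assms(3)] by (simp add: mem_Per_shift_iff)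
  also have "\<dots> \<longleftrightarrow> g \<in> U N"
    using JU_iff_Per_Cs[OF N assms(2)] by (simp add: mem_Per_shift_iff)
  finally show "g + (t - c) \<in> U N \<longleftrightarrow> g \<in> U N" .
qed

definition phase :: "(int^'n \<Rightarrow> int) \<Rightarrow> nat \<Rightarrow> int^'n" where
  "phase y N = (SOME t. shift t y \<in> Cs p D m N)"

lemma shift_phase_in_Cs: "y \<in> X \<Longrightarrow> N \<ge> 1 \<Longrightarrow> shift (phase y N) y \<in> Cs p D m N"
  unfolding phase_def using ex_shift_in_Cs by (rule someI_ex)

lemma phase_diff_in_Gam_if_piX_eq:
  assumes "piX p D m y = piX p D m x" "N \<ge> 1"
  shows "phase y N - phase x N \<in> \<Gamma> N"
proof -
  have "setplus {phase y N} (\<Gamma> N) = setplus {phase x N} (\<Gamma> N)"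
    using fun_cong[OF assms(1), of N] assms(2) by (simp add: piX_def phase_def)
  moreover have "phase y N \<in> setplus {phase y N} (\<Gamma> N)"
    by (auto simp: setplus_iff intro: bexI[of _ 0])
  ultimately show ?thesis
    by (auto simp: setplus_iff)
qed

lemma approx_Gam_shifts_shift_phase:
  assumes y: "y \<in> X" and "piX p D m y = piX p D m x" and N: "N \<ge> 1"
  shows "approx_Gam_shifts N (shift (phase x N) y)"
proof -
  obtain c where c: "approx_Gam_shifts N (shift c y)"
    using ex_shift_approx_Gam_shifts[OF y N] by blast
  have "phase y N - c \<in> \<Gamma> N"
    using Cs_shift_diff_in_Gam[OF N approx_Gam_shifts_in_Cs[OF shift_in_X[OF y] N c]
        shift_phase_in_Cs[OF y N]] .
  then have "(phase y N - c) - (phase y N - phase x N) \<in> \<Gamma> N"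
    using diff_in_Gam phase_diff_in_Gam_if_piX_eq[OF assms(2) N] by blast
  then have "approx_Gam_shifts N (shift (phase x N - c) (shift c y))"
    using approx_Gam_shifts_shift[OF _ c] by simp
  then show ?thesis
    by (simp add: shift_shift)
qed

definition fiber :: "(int^'n \<Rightarrow> int) \<Rightarrow> (int^'n \<Rightarrow> int) set" where
  "fiber x = {y \<in> X. piX p D m y = piX p D m x}"

definition aperiodic_points :: "(int^'n \<Rightarrow> int) \<Rightarrow> (int^'n) set" where
  "aperiodic_points x = {h. \<forall>N\<ge>1. \<forall>\<alpha>. h \<notin> Per x (\<Gamma> N) \<alpha>}"

lemma fiber_eq_outside_aperiodic_points:
  assumes x: "x \<in> X" and y: "y \<in> fiber x" and h: "h \<notin> aperiodic_points x"
  shows "y h = x h"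
proof -
  obtain N \<alpha> where N: "N \<ge> 1" and "h \<in> Per x (\<Gamma> N) \<alpha>"
    using h by (auto simp: aperiodic_points_def)
  define t where "t = phase x N"
  have "Per (shift t y) (\<Gamma> N) \<alpha> = Per (shift t x) (\<Gamma> N) \<alpha>"
    using approx_Gam_shifts_shift_phase[OF _ _ N] Per_eq_Per_eta_if_approx_Gam_shifts[OF N] x y
    by (simp add: fiber_def t_def)
  moreover have "h + t \<in> Per (shift t x) (\<Gamma> N) \<alpha>"
    using \<open>h \<in> Per x (\<Gamma> N) \<alpha>\<close> by (simp add: mem_Per_shift_iff)
  ultimately have "h + t \<in> Per (shift t y) (\<Gamma> N) \<alpha>"
    by simp
  then have "h \<in> Per y (\<Gamma> N) \<alpha>"
    by (simp add: mem_Per_shift_iff)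
  then show ?thesis
    using \<open>h \<in> Per x (\<Gamma> N) \<alpha>\<close> Per_iff[of h _ "\<Gamma> N"] zero_in_Gam by (metis diff_zero)
qed

lemma not_JU_if_aperiodic_point:
  assumes x: "x \<in> X" and h: "h \<in> aperiodic_points x" and N: "N \<ge> 1"
  shows "h + phase x N \<notin> U N"
  using JU_iff_Per_Cs[OF N shift_phase_in_Cs[OF x N]] h N
  by (auto simp: mem_Per_shift_iff aperiodic_points_def)

lemma fiber_eq_if_same_tile:
  assumes x: "x \<in> X" and y: "y \<in> fiber x" and N: "N \<ge> 1"
    and h: "h \<in> aperiodic_points x" "h' \<in> aperiodic_points x"
    and tile: "same_tile N (h + phase x N) (h' + phase x N)"
  shows "y h = y h'"
proof -
  define t where "t = phase x N"
  have "approx_Gam_shifts N (shift t y)"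
    using approx_Gam_shifts_shift_phase[OF _ _ N] y by (simp add: fiber_def t_def)
  then obtain \<gamma> where \<gamma>: "\<gamma> \<in> \<Gamma> N" "y h = \<eta> (h + t - \<gamma>)" "y h' = \<eta> (h' + t - \<gamma>)"
    unfolding approx_Gam_shifts_def shift_def
    by (metis (no_types, lifting) add_diff_cancel_right' finite.emptyI finite_insert insertCI)
  have "same_tile N (h + t + - \<gamma>) (h' + t + - \<gamma>)"
    using same_tile_add_Gam[OF uminus_in_Gam[OF \<gamma>(1)] tile] by (simp add: t_def)
  moreover have "h + t + - \<gamma> \<notin> U N" "h' + t + - \<gamma> \<notin> U N"
    using not_JU_if_aperiodic_point[OF x _ N] h JU_add_Gam_iff[OF N order_refl uminus_in_Gam[OF \<gamma>(1)]]
    by (simp_all add: t_def)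
  ultimately show ?thesis
    using eta_eq_if_same_tile[OF N] \<gamma>(2,3) by simp
qed

lemma p_gt_index: "i \<ge> 1 \<Longrightarrow> p j i > int i"
  using p_prop[rule_format, of i j] by linarith

lemma ex_tile_index:
  assumes N: "N \<ge> 1"
  obtains q :: "'n \<Rightarrow> int"
  where "\<And>a b. (\<And>j. (a $ j + q j) div p j N = (b $ j + q j) div p j N) \<Longrightarrow> same_tile N a b"
proof -
  obtain q1 q2 :: "'n \<Rightarrow> int" where q: "\<forall>j. q1 j + q2 j = p j N"
    and DN: "D N = {v. \<forall>j. - q1 j \<le> v $ j \<and> v $ j < q2 j}"
    using D_box N by blast
  have "same_tile N a b" if ab: "\<And>j. (a $ j + q1 j) div p j N = (b $ j + q1 j) div p j N" for a b
  proof -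
    define \<gamma> :: "int^'n" where "\<gamma> = (\<chi> j. p j N * ((a $ j + q1 j) div p j N))"
    have "z - \<gamma> \<in> D N" if "z \<in> {a, b}" for z
    proof -
      have "- q1 j \<le> (z - \<gamma>) $ j \<and> (z - \<gamma>) $ j < q2 j" for j
      proof -
        define w where "w = z $ j + q1 j"
        have "(z - \<gamma>) $ j = w - p j N * (w div p j N) - q1 j"
          using that ab[of j] by (auto simp: \<gamma>_def w_def)
        also have "\<dots> = w mod p j N - q1 j"
          by (simp add: minus_mult_div_eq_mod)
        finally have "(z - \<gamma>) $ j = w mod p j N - q1 j" .
        moreover have "0 < p j N"
          using p_gt_index[OF N, of j] by linarith
        ultimately show ?thesis
          using q[rule_format, of j] pos_mod_bound[of "p j N" w] pos_mod_sign[of "p j N" w] by linarith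
      qed
      then show ?thesis
        by (simp add: DN)
    qed
    moreover have "\<gamma> \<in> \<Gamma> N"
      by (simp add: \<gamma>_def Gam_iff)
    ultimately show ?thesis
      unfolding same_tile_def by blast
  qed
  then show thesis
    using that by blast
qed

lemma ex_same_tile_if_card_gt:
  assumes N: "N \<ge> 1" and S: "finite S" "card S > 2 ^ CARD('n)"
    and close: "\<forall>a\<in>S. \<forall>b\<in>S. \<forall>j. \<bar>a $ j - b $ j\<bar> < int N"
  shows "\<exists>a\<in>S. \<exists>b\<in>S. a \<noteq> b \<and> same_tile N a b"
proof -
  obtain q where tile: "\<And>a b. (\<And>j. (a $ j + q j) div p j N = (b $ j + q j) div p j N) \<Longrightarrow> same_tile N a b"
    using ex_tile_index[OF N] by blast
  define key where "key a j = (a $ j + q j) div p j N" for a j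
  have "\<exists>M. \<forall>a\<in>S. key a j \<in> {M, M + 1}" for j
    unfolding key_def
  proof (rule div_takes_two_values[OF S(1)])
    show "p j N > 0"
      using p_gt_index[OF N, of j] by linarith
    fix a b
    assume "a \<in> S" "b \<in> S"
    then have "\<bar>a $ j - b $ j\<bar> < int N"
      using close by blast
    then show "a $ j + q j < b $ j + q j + p j N"
      using p_gt_index[OF N, of j] by linarith
  qed
  then obtain M where M: "\<And>j. \<forall>a\<in>S. key a j \<in> {M j, M j + 1}"
    by metis
  have "key ` S \<subseteq> PiE UNIV (\<lambda>j. {M j, M j + 1})"
    using M by (auto simp: PiE_def extensional_def)
  then have "card (key ` S) \<le> card (PiE (UNIV :: 'n set) (\<lambda>j. {M j, M j + 1}))"
    by (intro card_mono finite_PiE) auto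
  also have "\<dots> = 2 ^ CARD('n)"
    by (simp add: card_PiE numeral_2_eq_2)
  finally have "\<not> inj_on key S"
    using S card_image by fastforce
  then obtain a b where "a \<in> S" "b \<in> S" "a \<noteq> b" "key a = key b"
    unfolding inj_on_def by blast
  moreover have "same_tile N a b"
    using tile fun_cong[OF \<open>key a = key b\<close>] by (simp add: key_def)
  ultimately show ?thesis
    by blast
qed

lemma card_le_if_separates_aperiodic_points:
  assumes x: "x \<in> X" and S: "S \<subseteq> aperiodic_points x" "finite S" "separates (fiber x) S"
  shows "card S \<le> 2 ^ CARD('n)"
proof (rule ccontr)
  assume "\<not> card S \<le> 2 ^ CARD('n)"
  define spread where "spread = (\<lambda>(a, b, j). nat \<bar>a $ j - b $ j\<bar>) ` (S \<times> S \<times> (UNIV :: 'n set))"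
  define N where "N = Suc (Max (insert 0 spread))"
  have N: "N \<ge> 1"
    by (simp add: N_def)
  have close: "\<bar>a $ j - b $ j\<bar> < int N" if "a \<in> S" "b \<in> S" for a b j
  proof -
    have "(a, b, j) \<in> S \<times> S \<times> UNIV"
      using that by simp
    then have "nat \<bar>a $ j - b $ j\<bar> \<in> spread"
      unfolding spread_def by (rule rev_image_eqI) simp
    moreover have "finite spread"
      unfolding spread_def using S(2) by simp
    ultimately have "nat \<bar>a $ j - b $ j\<bar> \<le> Max (insert 0 spread)"
      by (intro Max_ge) auto
    then show ?thesis
      unfolding N_def nat_le_iff by linarith
  qed
  define t where "t = phase x N"
  define S' where "S' = (\<lambda>h. h + t) ` S"
  have "card S' = card S"
    unfolding S'_def by (rule card_image) (simp add: inj_on_def)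
  then have "finite S'" "card S' > 2 ^ CARD('n)"
    using S(2) \<open>\<not> card S \<le> 2 ^ CARD('n)\<close> by (simp_all add: S'_def)
  moreover have "\<forall>a\<in>S'. \<forall>b\<in>S'. \<forall>j. \<bar>a $ j - b $ j\<bar> < int N"
  proof (intro ballI allI)
    fix a b j
    assume "a \<in> S'" "b \<in> S'"
    then obtain h h' where "a = h + t" "h \<in> S" "b = h' + t" "h' \<in> S"
      unfolding S'_def by (metis imageE)
    then show "\<bar>a $ j - b $ j\<bar> < int N"
      using close[of h h' j] by simp
  qed
  ultimately have "\<exists>a\<in>S'. \<exists>b\<in>S'. a \<noteq> b \<and> same_tile N a b"
    by (rule ex_same_tile_if_card_gt[OF N])
  then obtain a b where ab: "a \<in> S'" "b \<in> S'" "a \<noteq> b" "same_tile N a b"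
    by blast
  obtain h h' where h: "a = h + t" "h \<in> S" "b = h' + t" "h' \<in> S"
    using ab(1,2) unfolding S'_def by (metis imageE)
  have "y h = y h'" if "y \<in> fiber x" for y
    using fiber_eq_if_same_tile[OF x that N subsetD[OF S(1) h(2)] subsetD[OF S(1) h(4)]] ab(4) h(1,3)
    by (simp add: t_def)
  moreover have "h \<noteq> h'"
    using ab(3) h(1,3) by blast
  ultimately show False
    using h(2,4) S(3) unfolding separates_def by blast
qed

lemma finite_card_fiber_le:
  assumes x: "x \<in> X"
  shows "finite (fiber x) \<and> card (fiber x) \<le> m ^ 2 ^ CARD('n)"
proof -
  have "finite (fiber x) \<and> card (fiber x) \<le> card {1..int m} ^ 2 ^ CARD('n)"
  proof (rule finite_card_le_power_if_separated_sets_bounded)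
    show "y a \<in> {1..int m}" if "y \<in> fiber x" for y a
      using X_in_range that by (simp add: fiber_def)
    show "y a = y' a" if "y \<in> fiber x" "y' \<in> fiber x" "a \<notin> aperiodic_points x" for y y' a
      using fiber_eq_outside_aperiodic_points[OF x that(1,3)]
        fiber_eq_outside_aperiodic_points[OF x that(2,3)] by simp
    show "card S \<le> 2 ^ CARD('n)"
      if "S \<subseteq> aperiodic_points x" "finite S" "separates (fiber x) S" for S
      using card_le_if_separates_aperiodic_points[OF x that] .
  qed simp
  then show ?thesis
    by simp
qed

end

theorem proposition4p8:
  fixes p :: "'n::finite \<Rightarrow> nat \<Rightarrow> int" and D :: "nat \<Rightarrow> (int^'n) set"
    and m :: nat and x :: "int^'n \<Rightarrow> int"
  assumes r2: "CARD('n) \<ge> 2"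
    and p_prop: "\<forall>j i. i \<ge> 1 \<longrightarrow> 0 < p j i \<and> p j i < p j (Suc i) \<and> p j i dvd p j (Suc i)
                   \<and> p j i > 2 * int i + 1"
    and index: "\<forall>i\<ge>1. real (subgroup_index (Gam p i) (Gam p (Suc i)))
                   > 1 / (1 - 2 powr (- ((1/2) ^ (Suc i))))"
    and D_box: "\<forall>i\<ge>1. \<exists>q1 q2 :: 'n \<Rightarrow> int. (\<forall>j. q1 j > int i \<and> q2 j > int i \<and> q1 j + q2 j = p j i)
                   \<and> D i = {v. \<forall>j. - q1 j \<le> v $ j \<and> v $ j < q2 j}"
    and D_fund: "\<forall>i\<ge>1. \<forall>g. \<exists>!d. d \<in> D i \<and> g - d \<in> Gam p i"
    and D_mono: "\<forall>i\<ge>1. 0 \<in> D i \<and> D i \<subseteq> D (Suc i)"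
    and D_union: "(\<Union>i\<in>{1..}. D i) = UNIV"
    and D_rec: "\<forall>i\<ge>2. D i = (\<Union>\<gamma>\<in>D i \<inter> Gam p (i - 1). (\<lambda>d. \<gamma> + d) ` D (i - 1))"
    and m2: "m \<ge> 2"
    and xX: "x \<in> Xs p D m"
  shows "finite {y \<in> Xs p D m. piX p D m y = piX p D m x}
       \<and> card {y \<in> Xs p D m. piX p D m y = piX p D m x} \<le> m ^ (2 ^ CARD('n))"
proof -
  \<comment> \<open>Neither \<open>r2\<close> nor the index condition is needed for this bound.\<close>
  interpret toeplitz p D m
    using p_prop D_box D_fund D_mono D_union D_rec m2 by unfold_locales
  show ?thesis
    using finite_card_fiber_le[OF xX] by (simp add: fiber_def)
qed

end
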